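(* Let $L\in\mathcal{L}_*^n$ and $f\in\operatorname{int}(L)$. Let $\gamma\in(0,1]$ and $L'=\gamma(L-f)+f$. Assume there are $m\in\mathbb{N}$, $t\in\mathbb{Z}$ and a maximal lattice-free set $D\in\mathcal{L}_m^{n-1}$ such that (a) $L\cap(\mathbb{R}^{n-1}\times\{t\})\subseteq D\times\{t\}$, (b) $w(L',e_n)\le1$, and (c) $L'\cap(\mathbb{R}^{n-1}\times\{t\})$ is nonempty. Then there exists a lattice-free set $B\in\mathcal{L}_{m+1}^n$ such that $\frac14\gamma(L-f)+f\subseteq B$.
   Context: For $d\in\mathbb{N}$, a set $B\subseteq\mathbb{R}^d$ is lattice-free if it is a $d$-dimensional closed convex set with $\operatorname{int}(B)\cap\mathbb{Z}^d=\emptyset$; it is maximal lattice-free if it is not a proper subset of another lattice-free set. $\mathcal{L}_i^d$ is the family of lattice-free polyhedra in $\mathbb{R}^d$ with at most $i$ facets, and $\mathcal{L}_*^d$ the family of all lattice-free polyhedra in $\mathbb{R}^d$. $e_n$ is the $n$-th standard basis vector, and for nonempty $X\subseteq\mathbb{R}^n$ and $u\in\mathbb{R}^n$, $w(X,u)=\sup_{x\in X}u\cdot x-\inf_{x\in X}u\cdot x$. *)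

theory Defs
  imports "HOL-Analysis.Analysis"
begin

definition int_points :: "'a::euclidean_space set" where
  "int_points = {x. \<forall>b\<in>Basis. x \<bullet> b \<in> \<int>}"

definition lattice_free :: "'a::euclidean_space set \<Rightarrow> bool" where
  "lattice_free B \<longleftrightarrow> closed B \<and> convex B \<and> aff_dim B = int DIM('a)
     \<and> interior B \<inter> int_points = {}"

definition max_lattice_free :: "'a::euclidean_space set \<Rightarrow> bool" where
  "max_lattice_free B \<longleftrightarrow> lattice_free B \<and> (\<forall>C. lattice_free C \<and> B \<subseteq> C \<longrightarrow> C = B)"

text \<open>The family L_i^d: lattice-free polyhedra with at most i facets.\<close>
definition lf_poly :: "nat \<Rightarrow> 'a::euclidean_space set set" where
  "lf_poly i = {B. lattice_free B \<and> polyhedron B \<and> finite {F. F facet_of B}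
                   \<and> card {F. F facet_of B} \<le> i}"

text \<open>The family L_*^d: all lattice-free polyhedra.\<close>
definition lf_poly_all :: "'a::euclidean_space set set" where
  "lf_poly_all = {B. lattice_free B \<and> polyhedron B}"

text \<open>Width w(X,u), in the extended reals (infinite if unbounded).\<close>
definition width :: "'a::euclidean_space set \<Rightarrow> 'a \<Rightarrow> ereal" where
  "width X u = (SUP x\<in>X. ereal (u \<bullet> x)) - (INF x\<in>X. ereal (u \<bullet> x))"

end

theory Submission
  imports Defs
begin

text \<open>Write \<open>D\<close> as the intersection of its facet halfspaces \<open>a\<^sub>i \<bullet> y \<le> b\<^sub>i\<close> and let \<open>S\<close> be the
  quarter of \<open>L' = \<gamma> (L - f) + f\<close> around \<open>f\<close>. Since \<open>L'\<close> has width at most 1 in direction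
  \<open>e\<^sub>n\<close> and meets the hyperplane \<open>x\<^sub>n = t\<close>, a set \<open>S\<close> lying on one side of that hyperplane
  fits in a lattice-free slab with two facets. Otherwise \<open>S\<close> crosses the hyperplane and is covered
  by a cone \<open>{x\<^sub>n - t \<ge> -1, a\<^sub>i \<bullet> y + c\<^sub>i (x\<^sub>n - t) \<le> b\<^sub>i}\<close> over \<open>D\<close> with \<open>m + 1\<close> facets,
  oriented so that the shallower side of \<open>L'\<close> is up. The cone is lattice-free as soon as its slopes
  \<open>c\<^sub>i\<close> dominate those of the cone over \<open>D\<close> with an apex of height at most 1, because an
  integer point at positive height would yield a common descent direction of \<open>D\<close>. Such an apex is
  \<open>f + \<tau> (f - q)\<close> for a deep point \<open>q \<in> L'\<close>: central projection from it maps the part of \<open>S\<close>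
  above the hyperplane into \<open>L' \<inter> {x\<^sub>n = t} \<subseteq> D\<close>, while the points of \<open>S\<close> below the
  hyperplane only bound the slopes from below.\<close>

section \<open>Halfspace descriptions of lattice-free polyhedra\<close>

lemma int_point_near:
  fixes c :: "'a::euclidean_space"
  obtains z where "z \<in> int_points" "norm (c - z) < real DIM('a)"
proof -
  define z where "z = (\<Sum>b\<in>Basis. of_int \<lfloor>c \<bullet> b\<rfloor> *\<^sub>R b :: 'a)"
  have z_coord: "z \<bullet> b = of_int \<lfloor>c \<bullet> b\<rfloor>" if "b \<in> Basis" for b
    using that by (simp add: z_def inner_sum_left inner_Basis if_distrib cong: if_cong)
  have "norm (c - z) \<le> (\<Sum>b\<in>Basis. \<bar>(c - z) \<bullet> b\<bar>)" by (rule norm_le_l1)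
  also have "\<dots> < (\<Sum>b\<in>(Basis::'a set). 1)"
  proof (rule sum_strict_mono)
    fix b :: 'a assume "b \<in> Basis"
    then show "\<bar>(c - z) \<bullet> b\<bar> < 1"
      using z_coord[of b] by (simp add: inner_diff_left) linarith
  qed auto
  also have "\<dots> = real DIM('a)" by simp
  finally have "norm (c - z) < real DIM('a)" .
  moreover have "z \<in> int_points"
    using z_coord by (simp add: int_points_def)
  ultimately show thesis using that by blast
qed

lemma lattice_free_interior_nonempty:
  fixes D :: "'a::euclidean_space set"
  assumes "lattice_free D"
  shows "interior D \<noteq> {}"
proof -
  have "D \<noteq> {}" using assms by (auto simp: lattice_free_def)
  then show ?thesis
    using assms rel_interior_eq_empty interior_rel_interior_gen
    unfolding lattice_free_def by metis
qed

lemma interior_INT_halfspace_le: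
  assumes "finite I" "\<And>i. i \<in> I \<Longrightarrow> a i \<noteq> 0"
  shows "interior (\<Inter>i\<in>I. {x. a i \<bullet> x \<le> b i}) = (\<Inter>i\<in>I. {x. a i \<bullet> x < b i})"
  using assms by (induction I rule: finite_induct) auto

text \<open>Along a direction of strict descent for all constraints the polyhedron would contain
  arbitrarily large balls.\<close>
lemma lattice_free_INT_halfspace_le_no_descent:
  assumes lf: "lattice_free (\<Inter>i\<in>I. {x. a i \<bullet> x \<le> b i})"
    and fin: "finite I" and nz: "\<And>i. i \<in> I \<Longrightarrow> a i \<noteq> 0"
  shows "\<exists>i\<in>I. 0 \<le> a i \<bullet> u"
proof (rule ccontr)
  assume "\<not> ?thesis"
  then have descent: "a i \<bullet> u < 0" if "i \<in> I" for i
    using that by force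
  define D where "D = (\<Inter>i\<in>I. {x. a i \<bullet> x \<le> b i})"
  obtain d where d: "d \<in> D" using lattice_free_interior_nonempty[OF lf] interior_subset D_def by blast
  define \<mu> where "\<mu> = Min (insert 1 ((\<lambda>i. - (a i \<bullet> u)) ` I))"
  define M where "M = 1 + Max (insert 0 ((\<lambda>i. norm (a i)) ` I))"
  have \<mu>_pos: "\<mu> > 0" and \<mu>_le: "\<And>i. i \<in> I \<Longrightarrow> \<mu> \<le> - (a i \<bullet> u)"
    unfolding \<mu>_def using fin descent by auto
  have M_ge: "norm (a i) \<le> M - 1" if "i \<in> I" for i
    unfolding M_def using fin that by (simp add: Max_ge)
  have M_pos: "M > 0"
    unfolding M_def using fin by (smt (verit) Max_ge finite_imageI finite_insert insertI1)
  define r where "r = real DIM('a) * M / \<mu>"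
  obtain z where z: "z \<in> int_points" "norm (d + r *\<^sub>R u - z) < real DIM('a)"
    using int_point_near by blast
  have "a i \<bullet> z < b i" if i: "i \<in> I" for i
  proof -
    have "a i \<bullet> d \<le> b i" using d i by (auto simp: D_def)
    moreover have "r * (a i \<bullet> u) \<le> - r * \<mu>"
      using mult_left_mono[OF \<mu>_le[OF i], of r] \<mu>_pos M_pos by (simp add: r_def)
    moreover have "- (a i \<bullet> (d + r *\<^sub>R u - z)) < M * real DIM('a)"
      using Cauchy_Schwarz_ineq2[of "a i" "d + r *\<^sub>R u - z"] z(2) M_ge[OF i]
      by (smt (verit, best) mult_strict_mono' norm_ge_zero)
    moreover have "r * \<mu> = M * real DIM('a)" using \<mu>_pos by (simp add: r_def)
    ultimately show ?thesis
      by (simp add: inner_diff_right inner_add_right)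
  qed
  then have "z \<in> interior D"
    using interior_INT_halfspace_le[of I a b, OF fin nz] by (simp add: D_def)
  then show False using lf z(1) by (auto simp: lattice_free_def D_def)
qed

lemma facet_of_INT_halfspace_le:
  fixes B :: "'a::euclidean_space set"
  assumes fin: "finite J" and B: "B = (\<Inter>j\<in>J. {x. p j \<bullet> x \<le> q j})"
    and nz: "\<And>j. j \<in> J \<Longrightarrow> p j \<noteq> 0" and int: "interior B \<noteq> {}"
    and C: "C facet_of B"
  shows "\<exists>j\<in>J. C = B \<inter> {x. p j \<bullet> x = q j}"
proof -
  have conv: "convex B" unfolding B by (intro convex_INT) (auto intro: convex_halfspace_le)
  have Cf: "C face_of B" and Cne: "C \<noteq> {}" and Cdim: "aff_dim C = aff_dim B - 1"
    using C by (auto simp: facet_of_def)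
  obtain x where xC: "x \<in> rel_interior C"
    using Cne Cf face_of_imp_convex rel_interior_eq_empty by blast
  have xB: "x \<in> B" using xC Cf rel_interior_subset face_of_imp_subset by blast
  have "C \<noteq> B" using Cdim by auto
  then have "x \<notin> rel_interior B"
    using face_of_disjoint_rel_interior[OF Cf] xC rel_interior_subset by blast
  then have "x \<notin> interior B" using int rel_interior_nonempty_interior by blast
  then obtain j where j: "j \<in> J" "\<not> p j \<bullet> x < q j"
    using interior_INT_halfspace_le[of J p q, OF fin nz] B by blast
  then have xj: "p j \<bullet> x = q j" using xB B by fastforce
  define F where "F = B \<inter> {x. p j \<bullet> x = q j}"
  have Ff: "F face_of B"
    unfolding F_def using B j(1) by (intro face_of_Int_supporting_hyperplane_le[OF conv]) blast
  have CF: "C \<subseteq> F"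
    by (rule subset_of_face_of[OF Ff]) (use Cf face_of_imp_subset xC xj xB F_def in auto)
  have "F \<noteq> B"
  proof
    assume "F = B"
    then have "interior B \<subseteq> interior {x. p j \<bullet> x = q j}"
      unfolding F_def by (metis Int_lower2 interior_mono)
    then show False using int nz[OF j(1)] by (simp add: interior_hyperplane)
  qed
  then have "aff_dim F < aff_dim B" using face_of_aff_dim_lt[OF conv Ff] by blast
  moreover have "C face_of F" using face_of_subset[OF Cf CF] F_def by blast
  ultimately have "C = F"
    using face_of_aff_dim_lt[OF face_of_imp_convex[OF Ff]] Cdim by force
  then show ?thesis using j(1) F_def by blast
qed

lemma card_facets_INT_halfspace_le:
  fixes B :: "'a::euclidean_space set"
  assumes fin: "finite J" and B: "B = (\<Inter>j\<in>J. {x. p j \<bullet> x \<le> q j})"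
    and nz: "\<And>j. j \<in> J \<Longrightarrow> p j \<noteq> 0" and int: "interior B \<noteq> {}"
  shows "finite {C. C facet_of B}" "card {C. C facet_of B} \<le> card J"
proof -
  have sub: "{C. C facet_of B} \<subseteq> (\<lambda>j. B \<inter> {x. p j \<bullet> x = q j}) ` J"
    using facet_of_INT_halfspace_le[OF fin B nz int] by blast
  show "finite {C. C facet_of B}" using finite_subset[OF sub] fin by blast
  show "card {C. C facet_of B} \<le> card J"
    using card_mono[OF _ sub] card_image_le[OF fin] fin by (meson finite_imageI order_trans)
qed

lemma INT_halfspace_le_in_lf_poly:
  fixes p :: "'j \<Rightarrow> 'a::euclidean_space"
  assumes fin: "finite J" and nz: "\<And>j. j \<in> J \<Longrightarrow> p j \<noteq> 0"
    and inner: "\<forall>j\<in>J. p j \<bullet> z < q j"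
    and no_lattice: "\<And>x. x \<in> int_points \<Longrightarrow> \<exists>j\<in>J. q j \<le> p j \<bullet> x"
  shows "(\<Inter>j\<in>J. {x. p j \<bullet> x \<le> q j}) \<in> lf_poly (card J)"
proof -
  let ?B = "\<Inter>j\<in>J. {x. p j \<bullet> x \<le> q j}"
  have int: "interior ?B = (\<Inter>j\<in>J. {x. p j \<bullet> x < q j})"
    by (rule interior_INT_halfspace_le[of J p q, OF fin nz])
  have poly: "polyhedron ?B"
    by (intro polyhedron_Inter) (auto simp: fin polyhedron_halfspace_le)
  have "lattice_free ?B"
    unfolding lattice_free_def
  proof (intro conjI)
    show "closed ?B" "convex ?B" using poly polyhedron_imp_closed polyhedron_imp_convex by blast+
    show "aff_dim ?B = int DIM('a)" using int inner aff_dim_nonempty_interior by blast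
    show "interior ?B \<inter> int_points = {}" using int no_lattice by fastforce
  qed
  moreover have "finite {C. C facet_of ?B}" "card {C. C facet_of ?B} \<le> card J"
    using card_facets_INT_halfspace_le[OF fin refl, of p q] nz int inner by blast+
  ultimately show ?thesis
    using poly by (simp add: lf_poly_def)
qed

lemma lf_poly_mono: "B \<in> lf_poly i \<Longrightarrow> i \<le> j \<Longrightarrow> B \<in> lf_poly j"
  by (auto simp: lf_poly_def)

text \<open>A segment from an interior point to a point outside leaves through a facet.\<close>
lemma polyhedron_eq_INT_facet_halfspaces:
  fixes D :: "'a::euclidean_space set"
  assumes poly: "polyhedron D" and int: "interior D \<noteq> {}"
  obtains a b where "\<And>C. C facet_of D \<Longrightarrow> a C \<noteq> 0"
    "D = (\<Inter>C\<in>{C. C facet_of D}. {x. a C \<bullet> x \<le> b C})"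
proof -
  have "\<exists>a b. a \<noteq> 0 \<and> D \<subseteq> {x. a \<bullet> x \<le> b} \<and> C = D \<inter> {x. a \<bullet> x = b}"
    if "C facet_of D" for C
    using facet_of_polyhedron[OF poly that] by blast
  then obtain a b where nz: "\<And>C. C facet_of D \<Longrightarrow> a C \<noteq> 0"
    and sub: "\<And>C. C facet_of D \<Longrightarrow> D \<subseteq> {x. a C \<bullet> x \<le> b C}"
    and eq: "\<And>C. C facet_of D \<Longrightarrow> C = D \<inter> {x. a C \<bullet> x = b C}"
    by metis
  have "x \<in> D" if x: "x \<in> (\<Inter>C\<in>{C. C facet_of D}. {x. a C \<bullet> x \<le> b C})" for x
  proof (rule ccontr)
    assume xD: "x \<notin> D"
    obtain d where d: "d \<in> interior D" using int by blast
    have "closed_segment d x \<inter> frontier D \<noteq> {}"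
    proof (rule connected_Int_frontier)
      show "closed_segment d x \<inter> D \<noteq> {}" using d interior_subset by fastforce
      show "closed_segment d x - D \<noteq> {}" using xD by auto
    qed simp
    then obtain z where zs: "z \<in> closed_segment d x" and zf: "z \<in> frontier D" by blast
    have zD: "z \<in> D" and "z \<notin> interior D"
      using zf polyhedron_imp_closed[OF poly] by (auto simp: frontier_def)
    then have "z \<in> D - rel_interior D" using int rel_interior_nonempty_interior by blast
    then obtain C where C: "C facet_of D" "z \<in> C"
      using rel_interior_of_polyhedron[OF poly] by blast
    have "d \<in> interior {x. a C \<bullet> x \<le> b C}" using d interior_mono sub[OF C(1)] by blast
    then have ad: "a C \<bullet> d < b C" using nz[OF C(1)] by simp
    have ax: "a C \<bullet> x \<le> b C" using x C(1) by blast
    obtain \<theta> where th: "0 \<le> \<theta>" "\<theta> \<le> 1" "z = (1 - \<theta>) *\<^sub>R d + \<theta> *\<^sub>R x"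
      using zs by (auto simp: closed_segment_def)
    have "\<theta> \<noteq> 1" using th zD xD by auto
    then have "a C \<bullet> z < (1 - \<theta>) * b C + \<theta> * b C"
      using ad ax th by (simp add: inner_add_right add_less_le_mono mult_left_mono)
    then have "a C \<bullet> z < b C" by (simp add: algebra_simps)
    moreover have "a C \<bullet> z = b C" using C(2) by (subst (asm) eq[OF C(1)]) simp
    ultimately show False by simp
  qed
  then have "D = (\<Inter>C\<in>{C. C facet_of D}. {x. a C \<bullet> x \<le> b C})" using sub by blast
  with nz show thesis by (rule that)
qed

lemma lf_poly_halfspace_representation:
  fixes D :: "'a::euclidean_space set"
  assumes "D \<in> lf_poly m"
  obtains I :: "'a set set" and a b where "finite I" "I \<noteq> {}" "card I \<le> m"
    "\<And>i. i \<in> I \<Longrightarrow> a i \<noteq> 0" "D = (\<Inter>i\<in>I. {x. a i \<bullet> x \<le> b i})"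
proof -
  have lf: "lattice_free D" and poly: "polyhedron D"
    and fin: "finite {C. C facet_of D}" and card: "card {C. C facet_of D} \<le> m"
    using assms by (auto simp: lf_poly_def)
  obtain a b where nz: "\<And>C. C facet_of D \<Longrightarrow> a C \<noteq> 0"
    and D: "D = (\<Inter>C\<in>{C. C facet_of D}. {x. a C \<bullet> x \<le> b C})"
    by (rule polyhedron_eq_INT_facet_halfspaces[OF poly lattice_free_interior_nonempty[OF lf]]) blast
  have ne: "{C. C facet_of D} \<noteq> {}"
  proof
    assume "{C. C facet_of D} = {}"
    then have "0 \<in> interior D" using D by simp
    then show False using lf by (auto simp: lattice_free_def int_points_def)
  qed
  show thesis using fin ne card nz D by (rule that) auto
qed

section \<open>Lattice-free slabs and cones\<close>

lemma int_points_prodD: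
  fixes x :: "'a::euclidean_space \<times> 'b::euclidean_space"
  assumes "x \<in> int_points"
  shows "fst x \<in> int_points" "snd x \<in> int_points"
proof -
  have "x \<bullet> b \<in> \<int>" if "b \<in> Basis" for b
    using assms that by (simp add: int_points_def)
  then show "fst x \<in> int_points" "snd x \<in> int_points"
    by (cases x; force simp: int_points_def Basis_prod_def inner_Pair)+
qed

lemma int_points_real: "(x::real) \<in> int_points \<longleftrightarrow> x \<in> \<int>"
  by (simp add: int_points_def)

lemma slab_in_lf_poly:
  fixes k :: int
  shows "{x::'a::euclidean_space \<times> real. real_of_int k \<le> snd x \<and> snd x \<le> real_of_int k + 1} \<in> lf_poly 2"
proof -
  define p where "p j = (if j then ((0::'a), -1) else (0, 1 :: real))" for j
  define q where "q j = (if j then - real_of_int k else k + 1)" for j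
  have "{x::'a \<times> real. real_of_int k \<le> snd x \<and> snd x \<le> real_of_int k + 1} = (\<Inter>j\<in>UNIV. {x. p j \<bullet> x \<le> q j})"
    by (auto simp: p_def q_def inner_prod_def UNIV_bool)
  moreover have "(\<Inter>j\<in>UNIV. {x. p j \<bullet> x \<le> q j}) \<in> lf_poly (card (UNIV :: bool set))"
  proof (rule INT_halfspace_le_in_lf_poly)
    show "\<forall>j\<in>UNIV. p j \<bullet> (0, k + 1/2) < q j"
      by (simp add: p_def q_def inner_prod_def)
    fix x :: "'a \<times> real" assume "x \<in> int_points"
    then have "snd x \<in> \<int>" using int_points_prodD(2) int_points_real by blast
    then obtain n where "snd x = of_int n" by (auto elim: Ints_cases)
    then show "\<exists>j\<in>UNIV. q j \<le> p j \<bullet> x"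
      by (cases "n \<le> k") (auto simp: p_def q_def inner_prod_def)
  qed (auto simp: p_def zero_prod_def)
  ultimately show ?thesis by simp
qed

text \<open>An integer point at height \<open>k \<ge> 1\<close> of the cone would give, with \<open>s = \<kappa> k\<close> and any
  \<open>d \<in> D\<close>, the direction \<open>fst x - s w + (s - 1) d\<close> of strict descent for all constraints of \<open>D\<close>.\<close>
lemma cone_over_lattice_free_int_point:
  fixes a :: "'i \<Rightarrow> 'a::euclidean_space" and c :: "'i \<Rightarrow> real" and x :: "'a \<times> real"
    and t :: int and \<sigma> :: real
  assumes lf: "lattice_free (\<Inter>i\<in>I. {x. a i \<bullet> x \<le> b i})"
    and fin: "finite I" and nz: "\<And>i. i \<in> I \<Longrightarrow> a i \<noteq> 0"
    and \<sigma>: "\<sigma> = 1 \<or> \<sigma> = -1" and \<kappa>: "1 \<le> \<kappa>"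
    and c: "\<And>i. i \<in> I \<Longrightarrow> \<kappa> * (b i - a i \<bullet> w) \<le> c i"
    and x: "x \<in> int_points" and low: "-1 < \<sigma> * (snd x - t)"
  shows "\<exists>i\<in>I. b i \<le> a i \<bullet> fst x + c i * (\<sigma> * (snd x - t))"
proof (rule ccontr)
  assume "\<not> ?thesis"
  then have strict: "\<And>i. i \<in> I \<Longrightarrow> a i \<bullet> fst x + c i * (\<sigma> * (snd x - t)) < b i"
    by force
  define D where "D = (\<Inter>i\<in>I. {x. a i \<bullet> x \<le> b i})"
  have "\<sigma> * (snd x - t) \<in> \<int>"
    using \<sigma> int_points_prodD(2)[OF x] by (auto simp: int_points_real)
  then obtain k where k: "\<sigma> * (snd x - t) = of_int k" by (auto elim: Ints_cases)
  show False
  proof (cases "k = 0")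
    case True
    then have "fst x \<in> interior D"
      using strict k interior_INT_halfspace_le[of I a b, OF fin nz] by (simp add: D_def)
    then show False using lf int_points_prodD(1)[OF x] by (auto simp: lattice_free_def D_def)
  next
    case False
    then have k1: "1 \<le> real_of_int k" using low k by simp
    obtain d where d: "d \<in> D" using lattice_free_interior_nonempty lf interior_subset D_def by blast
    define s where "s = \<kappa> * k"
    have s1: "1 \<le> s" unfolding s_def using \<kappa> k1 by (metis mult_mono' mult_1 zero_le_one)
    have "a i \<bullet> (fst x - s *\<^sub>R w + (s - 1) *\<^sub>R d) < 0" if i: "i \<in> I" for i
    proof -
      have "s * (b i - a i \<bullet> w) \<le> c i * k"
        using mult_right_mono[OF c[OF i], of k] k1 by (simp add: s_def algebra_simps)
      moreover have "(s - 1) * (a i \<bullet> d) \<le> (s - 1) * b i"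
        using d i s1 by (intro mult_left_mono) (auto simp: D_def)
      moreover have "a i \<bullet> fst x + c i * k < b i" using strict[OF i] k by simp
      ultimately show ?thesis
        by (simp add: inner_add_right inner_diff_right algebra_simps)
    qed
    then show False
      using lattice_free_INT_halfspace_le_no_descent[where a = a and I = I, OF lf fin nz]
      by (meson not_less)
  qed
qed

lemma cone_over_lattice_free_in_lf_poly:
  fixes a :: "'i \<Rightarrow> 'a::euclidean_space" and t :: int
  assumes lf: "lattice_free (\<Inter>i\<in>I. {x. a i \<bullet> x \<le> b i})"
    and fin: "finite I" and nz: "\<And>i. i \<in> I \<Longrightarrow> a i \<noteq> 0"
    and \<sigma>: "\<sigma> = 1 \<or> \<sigma> = -1" and \<kappa>: "1 \<le> \<kappa>"
    and c: "\<And>i. i \<in> I \<Longrightarrow> \<kappa> * (b i - a i \<bullet> w) \<le> c i"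
  shows "{x::'a \<times> real. -1 \<le> \<sigma> * (snd x - t) \<and>
           (\<forall>i\<in>I. a i \<bullet> fst x + c i * (\<sigma> * (snd x - t)) \<le> b i)} \<in> lf_poly (card I + 1)"
proof -
  obtain y where y: "y \<in> interior (\<Inter>i\<in>I. {x. a i \<bullet> x \<le> b i})"
    using lattice_free_interior_nonempty lf by blast
  define J where "J = insert None (Some ` I)"
  define p where "p j = (case j of None \<Rightarrow> ((0::'a), -\<sigma>) | Some i \<Rightarrow> (a i, c i * \<sigma>))" for j
  define q where "q j = (case j of None \<Rightarrow> 1 - \<sigma> * t | Some i \<Rightarrow> b i + c i * \<sigma> * t)" for j
  have "{x::'a \<times> real. -1 \<le> \<sigma> * (snd x - t) \<and>
           (\<forall>i\<in>I. a i \<bullet> fst x + c i * (\<sigma> * (snd x - t)) \<le> b i)} = (\<Inter>j\<in>J. {x. p j \<bullet> x \<le> q j})"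
    by (auto simp: J_def p_def q_def inner_prod_def algebra_simps)
  moreover have "card J = card I + 1" using fin by (simp add: J_def card_image)
  moreover have "(\<Inter>j\<in>J. {x. p j \<bullet> x \<le> q j}) \<in> lf_poly (card J)"
  proof (rule INT_halfspace_le_in_lf_poly[where z = "(y, t)"])
    show "finite J" using fin by (simp add: J_def)
    show "p j \<noteq> 0" if "j \<in> J" for j
      using that \<sigma> nz by (auto simp: J_def p_def zero_prod_def)
    show "\<forall>j\<in>J. p j \<bullet> (y, t) < q j"
      using y interior_INT_halfspace_le[of I a b, OF fin nz]
      by (auto simp: J_def p_def q_def inner_prod_def algebra_simps)
    fix x :: "'a \<times> real" assume x: "x \<in> int_points"
    show "\<exists>j\<in>J. q j \<le> p j \<bullet> x"
    proof (cases "-1 < \<sigma> * (snd x - t)")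
      case True
      then show ?thesis
        using cone_over_lattice_free_int_point[OF lf fin nz \<sigma> \<kappa> c x]
        by (force simp: J_def p_def q_def inner_prod_def algebra_simps)
    qed (auto simp: J_def p_def q_def inner_prod_def algebra_simps)
  qed
  ultimately show ?thesis by simp
qed

section \<open>Central projections and tilted halfspaces\<close>

text \<open>The point where the line through \<open>c\<close> and \<open>z\<close> meets the hyperplane \<open>{y. v \<bullet> y = s}\<close>.\<close>
definition central_proj :: "'a::real_inner \<Rightarrow> 'a \<Rightarrow> real \<Rightarrow> 'a \<Rightarrow> 'a" where
  "central_proj c v s z = c + ((v \<bullet> c - s) / (v \<bullet> c - v \<bullet> z)) *\<^sub>R (z - c)"

lemma inner_central_proj:
  assumes "v \<bullet> z \<noteq> v \<bullet> c"
  shows "v \<bullet> central_proj c v s z = s"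
proof -
  have "(v \<bullet> c - s) / (v \<bullet> c - v \<bullet> z) * (v \<bullet> z - v \<bullet> c) = s - v \<bullet> c"
    using assms by (simp add: field_split_simps)
  then show ?thesis by (simp add: central_proj_def inner_add_right inner_diff_right)
qed

lemma inner_le_from_central_proj:
  assumes A: "0 < v \<bullet> c - s" and zc: "v \<bullet> z < v \<bullet> c"
    and le: "p \<bullet> central_proj c v s z \<le> \<beta>"
  shows "p \<bullet> z + ((\<beta> - p \<bullet> c) / (v \<bullet> c - s)) * (v \<bullet> z - s) \<le> \<beta>"
proof -
  define A where "A = v \<bullet> c - s"
  define \<delta> where "\<delta> = v \<bullet> z - s"
  have gap: "0 < A - \<delta>" using zc by (simp add: A_def \<delta>_def)
  have "p \<bullet> c + (A / (A - \<delta>)) * (p \<bullet> z - p \<bullet> c) \<le> \<beta>"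
    using le by (simp add: central_proj_def A_def \<delta>_def inner_add_right inner_diff_right)
  then have "(A - \<delta>) * (p \<bullet> c) + A * (p \<bullet> z - p \<bullet> c) \<le> (A - \<delta>) * \<beta>"
    using gap by (simp add: field_simps)
  moreover have "A * (p \<bullet> z + ((\<beta> - p \<bullet> c) / A) * \<delta>)
      = (A - \<delta>) * (p \<bullet> c) + A * (p \<bullet> z - p \<bullet> c) + \<delta> * \<beta>"
    using A by (simp add: A_def field_simps)
  ultimately have "A * (p \<bullet> z + ((\<beta> - p \<bullet> c) / A) * \<delta>) \<le> A * \<beta>"
    by (simp add: algebra_simps)
  then show ?thesis using A by (simp add: A_def \<delta>_def)
qed

lemma slope_below_le_slope_above:
  fixes S :: "'a::real_inner set"
  assumes conv: "convex S" and level: "\<And>z. z \<in> S \<Longrightarrow> v \<bullet> z = s \<Longrightarrow> p \<bullet> z \<le> \<beta>"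
    and z1: "z1 \<in> S" "v \<bullet> z1 < s" and z2: "z2 \<in> S" "s < v \<bullet> z2"
  shows "(p \<bullet> z1 - \<beta>) / (s - v \<bullet> z1) \<le> (\<beta> - p \<bullet> z2) / (v \<bullet> z2 - s)"
proof -
  define \<delta>1 where "\<delta>1 = s - v \<bullet> z1"
  define \<delta>2 where "\<delta>2 = v \<bullet> z2 - s"
  have pos: "0 < \<delta>1" "0 < \<delta>2" using z1 z2 by (simp_all add: \<delta>1_def \<delta>2_def)
  define m where "m = (\<delta>2 / (\<delta>1 + \<delta>2)) *\<^sub>R z1 + (\<delta>1 / (\<delta>1 + \<delta>2)) *\<^sub>R z2"
  have inner_m: "u \<bullet> m = (\<delta>2 * (u \<bullet> z1) + \<delta>1 * (u \<bullet> z2)) / (\<delta>1 + \<delta>2)" for u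
    by (simp add: m_def inner_add_right add_divide_distrib)
  have "m \<in> S"
    unfolding m_def using convexD[OF conv z1(1) z2(1)] pos by (simp add: add_divide_distrib[symmetric])
  moreover have "v \<bullet> m = s"
  proof -
    have "\<delta>2 * (v \<bullet> z1) + \<delta>1 * (v \<bullet> z2) = (\<delta>1 + \<delta>2) * s"
      by (simp add: \<delta>1_def \<delta>2_def algebra_simps)
    then show ?thesis using pos by (simp add: inner_m)
  qed
  ultimately have "p \<bullet> m \<le> \<beta>" by (rule level)
  then have "\<delta>2 * (p \<bullet> z1) + \<delta>1 * (p \<bullet> z2) \<le> (\<delta>1 + \<delta>2) * \<beta>"
    using pos by (simp add: inner_m pos_divide_le_eq algebra_simps)
  then have "\<delta>2 * (p \<bullet> z1 - \<beta>) \<le> \<delta>1 * (\<beta> - p \<bullet> z2)" by (simp add: algebra_simps)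
  then show ?thesis
    using pos by (simp add: \<delta>1_def [symmetric] \<delta>2_def [symmetric] field_simps mult.commute)
qed

text \<open>The slope \<open>c\<close> is the supremum of the slopes forced by the points of \<open>S\<close> below the level
  set; by the previous lemma it is compatible with the points above it.\<close>
lemma halfspace_tilt:
  fixes S :: "'a::real_inner set"
  assumes conv: "convex S" and level: "\<And>z. z \<in> S \<Longrightarrow> v \<bullet> z = s \<Longrightarrow> p \<bullet> z \<le> \<beta>"
    and above: "z0 \<in> S" "s < v \<bullet> z0"
    and upper: "\<And>z. z \<in> S \<Longrightarrow> s \<le> v \<bullet> z \<Longrightarrow> p \<bullet> z + k * (v \<bullet> z - s) \<le> \<beta>"
  obtains c where "k \<le> c" "\<And>z. z \<in> S \<Longrightarrow> p \<bullet> z + c * (v \<bullet> z - s) \<le> \<beta>"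
proof -
  define T where "T = insert k {(p \<bullet> z - \<beta>) / (s - v \<bullet> z) | z. z \<in> S \<and> v \<bullet> z < s}"
  have T_le: "y \<le> (\<beta> - p \<bullet> z) / (v \<bullet> z - s)" if y: "y \<in> T" and z: "z \<in> S" "s < v \<bullet> z" for y z
  proof -
    consider "y = k" | z1 where "z1 \<in> S" "v \<bullet> z1 < s" "y = (p \<bullet> z1 - \<beta>) / (s - v \<bullet> z1)"
      using y by (auto simp: T_def)
    then show ?thesis
    proof cases
      case 1
      then show ?thesis using upper[OF z(1)] z(2) by (simp add: pos_le_divide_eq algebra_simps)
    next
      case 2
      then show ?thesis using slope_below_le_slope_above[OF conv level _ _ z] by blast
    qed
  qed
  have bdd: "bdd_above T" using T_le[OF _ above] by (auto simp: bdd_above_def)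
  have "p \<bullet> z + Sup T * (v \<bullet> z - s) \<le> \<beta>" if z: "z \<in> S" for z
  proof -
    consider (below) "v \<bullet> z < s" | (on) "v \<bullet> z = s" | (above) "s < v \<bullet> z" by linarith
    then show ?thesis
    proof cases
      case below
      have "(p \<bullet> z - \<beta>) / (s - v \<bullet> z) \<le> Sup T"
        using z below bdd by (intro cSup_upper) (auto simp: T_def)
      then show ?thesis using below by (simp add: pos_divide_le_eq algebra_simps)
    next
      case on
      then show ?thesis using z level by simp
    next
      case above
      have "Sup T \<le> (\<beta> - p \<bullet> z) / (v \<bullet> z - s)"
        using T_le z above by (intro cSup_least) (auto simp: T_def)
      then show ?thesis using above by (simp add: le_divide_eq algebra_simps)
    qed
  qed
  moreover have "k \<le> Sup T" using bdd by (intro cSup_upper) (auto simp: T_def)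
  ultimately show thesis using that by blast
qed

section \<open>An apex over the shrunken set\<close>

lemma apex_condition_strict:
  fixes g H d :: real
  assumes "0 \<le> H" "H \<le> g" "g + H \<le> 1" "4 * d < g"
  shows "(4 * d + H) * (1 - d) < g * (3 - 4 * d - H)"
proof -
  define \<phi> where "\<phi> x = g * (3 - 4 * x - H) - (4 * x + H) * (1 - x)" for x
  have "\<phi> d = \<phi> (g / 4) + (d - g / 4) * (4 * d + H - 3 * g - 4)"
    unfolding \<phi>_def by (simp add: field_simps)
  moreover have "0 < (d - g / 4) * (4 * d + H - 3 * g - 4)"
    using assms by (intro mult_neg_neg) auto
  moreover have "\<phi> (g / 4) = g * (2 - 3 * (g + H) / 4) - H"
    unfolding \<phi>_def by (simp add: field_simps)
  moreover have "g * (5 / 4) \<le> g * (2 - 3 * (g + H) / 4)"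
    using assms by (intro mult_left_mono) auto
  ultimately have "0 < \<phi> d" using assms by linarith
  then show ?thesis unfolding \<phi>_def by simp
qed

lemma apex_condition_near:
  fixes g H d :: real
  assumes "0 \<le> H" "H \<le> g" "g + H \<le> 1" "4 * d < g" "0 < 4 * d + H"
  obtains u0 where "u0 < g"
    "\<And>u. u0 < u \<Longrightarrow> 4 * d + H < 3 * u \<and> (4 * d + H) * (1 - d) \<le> u * (3 - 4 * d - H)"
proof -
  have P3: "0 < 3 - 4 * d - H" using assms by linarith
  define u0 where "u0 = max ((4 * d + H) / 3) ((4 * d + H) * (1 - d) / (3 - 4 * d - H))"
  have "(4 * d + H) * (1 - d) / (3 - 4 * d - H) < g"
    using apex_condition_strict[OF assms(1-4)] P3 by (simp add: pos_divide_less_eq)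
  then have "u0 < g" using assms by (simp add: u0_def)
  moreover have "4 * d + H < 3 * u \<and> (4 * d + H) * (1 - d) \<le> u * (3 - 4 * d - H)" if "u0 < u" for u
  proof
    show "4 * d + H < 3 * u" using that by (simp add: u0_def)
    have "(4 * d + H) * (1 - d) / (3 - 4 * d - H) < u" using that by (simp add: u0_def)
    then show "(4 * d + H) * (1 - d) \<le> u * (3 - 4 * d - H)"
      using P3 by (simp add: pos_divide_less_eq)
  qed
  ultimately show thesis using that by blast
qed

lemma apex_height:
  fixes d H G :: real
  assumes H: "0 \<le> H" and pos: "0 < 4 * d + H"
    and c1: "4 * d + H < 3 * G" and c2: "(4 * d + H) * (1 - d) \<le> G * (3 - 4 * d - H)"
  obtains \<tau> where "0 \<le> \<tau>" "d + \<tau> * G \<le> 1" "d + H / 4 < d + \<tau> * G"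
    "(d + H / 4) * (1 + \<tau>) = 3 / 4 * (d + \<tau> * G)"
proof -
  define E where "E = 3 * G - 4 * d - H"
  have E: "0 < E" using c1 by (simp add: E_def)
  define \<tau> where "\<tau> = (d + H) / E"
  have \<tau>E: "\<tau> * E = d + H" using E by (simp add: \<tau>_def)
  have "0 \<le> \<tau>" using E H pos by (simp add: \<tau>_def)
  moreover have "d + \<tau> * G \<le> 1"
  proof -
    have "(d + \<tau> * G) * E = d * E + G * (\<tau> * E)" by (simp add: algebra_simps)
    also have "\<dots> = d * E + G * (d + H)" by (simp only: \<tau>E)
    also have "\<dots> \<le> E" using c2 by (simp add: E_def algebra_simps)
    finally show ?thesis using E by simp
  qed
  moreover have "d + H / 4 < d + \<tau> * G"
  proof -
    have "(d + \<tau> * G - (d + H / 4)) * E = (4 * d + H) * (G + H) / 4"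
      using \<tau>E by (simp add: E_def algebra_simps)
    moreover have "0 < (4 * d + H) * (G + H) / 4" using pos H c1 by simp
    ultimately have "0 < (d + \<tau> * G - (d + H / 4)) * E" by simp
    then show ?thesis using E by (smt (verit) mult_nonpos_nonneg)
  qed
  moreover have "(d + H / 4) * (1 + \<tau>) = 3 / 4 * (d + \<tau> * G)"
    using \<tau>E by (simp add: E_def algebra_simps)
  ultimately show thesis using that by blast
qed

lemma convex_mem_add_scaled_diffs:
  assumes "convex K" "f \<in> K" "x \<in> K" "q \<in> K" "0 \<le> u" "0 \<le> w" "u + w \<le> 1"
  shows "f + u *\<^sub>R (x - f) + w *\<^sub>R (q - f) \<in> K"
proof -
  have "f + u *\<^sub>R (x - f) + w *\<^sub>R (q - f) \<in> convex hull {f, x, q}"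
    using assms(5-7) by (auto simp: convex_hull_3_alt)
  moreover have "convex hull {f, x, q} \<subseteq> K" using assms(1-4) by (intro hull_minimal) auto
  ultimately show ?thesis by blast
qed

text \<open>The central projection from \<open>c = f + \<tau> (f - q)\<close> of the point \<open>f + (x - f)/4\<close> is the
  combination \<open>f + \<rho>/4 (x - f) + (\<rho> - 1) \<tau> (q - f)\<close> with \<open>\<rho> = A / (A - \<delta>)\<close>, where \<open>A\<close> and \<open>\<delta>\<close> are
  the heights of the two points; the hypothesis on \<open>\<delta>\<close> makes the weights sum to at most 1.\<close>
lemma central_proj_from_apex_mem:
  fixes K :: "'a::real_inner set" and f q x v :: 'a and \<tau> s :: real
  defines "c \<equiv> f + \<tau> *\<^sub>R (f - q)" and "z \<equiv> (1/4) *\<^sub>R (x - f) + f"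
  assumes conv: "convex K" and f: "f \<in> K" and x: "x \<in> K" and q: "q \<in> K"
    and \<tau>: "0 \<le> \<tau>" and A: "0 < v \<bullet> c - s" and \<delta>0: "s \<le> v \<bullet> z"
    and \<delta>_le: "(v \<bullet> z - s) * (1 + \<tau>) \<le> 3 / 4 * (v \<bullet> c - s)"
  shows "central_proj c v s z \<in> K"
proof -
  define A where "A = v \<bullet> c - s"
  define \<delta> where "\<delta> = v \<bullet> z - s"
  have "0 \<le> \<delta> * \<tau>" using \<delta>0 \<tau> by (simp add: \<delta>_def)
  then have "\<delta> \<le> 3 / 4 * A" using \<delta>_le by (simp add: A_def \<delta>_def algebra_simps)
  then have gap: "0 < A - \<delta>" using A by (simp add: A_def)
  define \<rho> where "\<rho> = A / (A - \<delta>)"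
  have "central_proj c v s z = c + \<rho> *\<^sub>R (z - c)"
    by (simp add: central_proj_def \<rho>_def A_def \<delta>_def algebra_simps)
  also have "\<dots> = f + (\<rho> / 4) *\<^sub>R (x - f) + ((\<rho> - 1) * \<tau>) *\<^sub>R (q - f)"
    by (simp add: c_def z_def algebra_simps)
  finally have proj: "central_proj c v s z = f + (\<rho> / 4) *\<^sub>R (x - f) + ((\<rho> - 1) * \<tau>) *\<^sub>R (q - f)" .
  have \<rho>1: "\<rho> - 1 = \<delta> / (A - \<delta>)" using gap by (simp add: \<rho>_def field_simps)
  have "\<rho> / 4 + (\<rho> - 1) * \<tau> = (A / 4 + \<delta> * \<tau>) / (A - \<delta>)"
    unfolding \<rho>1 add_divide_distrib by (simp add: \<rho>_def)
  moreover have "\<delta> * (1 + \<tau>) \<le> 3 / 4 * A" using \<delta>_le by (simp add: A_def \<delta>_def)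
  ultimately have "\<rho> / 4 + (\<rho> - 1) * \<tau> \<le> 1"
    using gap by (simp add: pos_divide_le_eq algebra_simps)
  moreover have "0 \<le> (\<rho> - 1) * \<tau>" using gap \<delta>0 \<tau> by (simp add: \<rho>1 \<delta>_def)
  ultimately show ?thesis
    unfolding proj using gap A by (intro convex_mem_add_scaled_diffs[OF conv f x q]) (auto simp: \<rho>_def A_def)
qed

lemma apex_over_quarter_shrink:
  fixes K :: "'a::real_inner set" and f q v :: 'a and s :: real
  defines "d \<equiv> v \<bullet> f - s" and "G \<equiv> v \<bullet> f - v \<bullet> q"
  assumes conv: "convex K" and f: "f \<in> K" and q: "q \<in> K"
    and upper: "\<And>x. x \<in> K \<Longrightarrow> v \<bullet> x - s \<le> d + H"
    and pos: "0 < 4 * d + H"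
    and c1: "4 * d + H < 3 * G" and c2: "(4 * d + H) * (1 - d) \<le> G * (3 - 4 * d - H)"
  obtains c where "0 < v \<bullet> c - s" "v \<bullet> c - s \<le> 1"
    "\<And>x. x \<in> K \<Longrightarrow> s \<le> v \<bullet> ((1/4) *\<^sub>R (x - f) + f) \<Longrightarrow>
       v \<bullet> ((1/4) *\<^sub>R (x - f) + f) < v \<bullet> c \<and> central_proj c v s ((1/4) *\<^sub>R (x - f) + f) \<in> K"
proof -
  have H: "0 \<le> H" using upper[OF f] by (simp add: d_def)
  obtain \<tau> where \<tau>: "0 \<le> \<tau>" "d + \<tau> * G \<le> 1" "d + H / 4 < d + \<tau> * G"
    "(d + H / 4) * (1 + \<tau>) = 3 / 4 * (d + \<tau> * G)"
    using apex_height[OF H pos c1 c2] by blast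
  define c where "c = f + \<tau> *\<^sub>R (f - q)"
  have hc: "v \<bullet> c - s = d + \<tau> * G"
    by (simp add: c_def d_def G_def inner_add_right inner_diff_right algebra_simps)
  have A: "0 < v \<bullet> c - s" using \<tau>(3) pos hc by simp
  have "v \<bullet> z < v \<bullet> c \<and> central_proj c v s z \<in> K"
    if x: "x \<in> K" and z: "z = (1/4) *\<^sub>R (x - f) + f" and above: "s \<le> v \<bullet> z" for x z
  proof
    have "v \<bullet> z - s = d + (v \<bullet> x - s - d) / 4"
      by (simp add: z d_def inner_add_right inner_diff_right field_simps)
    then have "v \<bullet> z - s \<le> d + H / 4" using upper[OF x] by simp
    then show "v \<bullet> z < v \<bullet> c" using \<tau>(3) hc by simp
    have "(v \<bullet> z - s) * (1 + \<tau>) \<le> 3 / 4 * (v \<bullet> c - s)"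
      using mult_right_mono[OF \<open>v \<bullet> z - s \<le> d + H / 4\<close>, of "1 + \<tau>"] \<tau>(1,4) hc by simp
    then show "central_proj c v s z \<in> K"
      using central_proj_from_apex_mem[OF conv f x q \<tau>(1)] A above unfolding c_def z by blast
  qed
  moreover have "v \<bullet> c - s \<le> 1" using hc \<tau>(2) by simp
  ultimately show thesis using A that by blast
qed

section \<open>Covering the shrunken set\<close>

lemma convex_homothety_image:
  assumes "convex X"
  shows "convex ((\<lambda>x. \<gamma> *\<^sub>R (x - f) + f) ` X)"
proof -
  have "(\<lambda>x. \<gamma> *\<^sub>R (x - f) + f) = (\<lambda>x. (f - \<gamma> *\<^sub>R f) + \<gamma> *\<^sub>R x)"
    by (auto simp: algebra_simps)
  then show ?thesis using convex_affinity[OF assms] by metis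
qed

lemma homothety_image_subset:
  assumes "convex X" "f \<in> X" "0 \<le> \<gamma>" "\<gamma> \<le> 1"
  shows "(\<lambda>x. \<gamma> *\<^sub>R (x - f) + f) ` X \<subseteq> X"
proof
  fix y assume "y \<in> (\<lambda>x. \<gamma> *\<^sub>R (x - f) + f) ` X"
  then obtain x where x: "x \<in> X" "y = (1 - \<gamma>) *\<^sub>R f + \<gamma> *\<^sub>R x"
    by (auto simp: algebra_simps)
  then show "y \<in> X" using convexD_alt[OF assms(1,2) x(1)] assms(3,4) by simp
qed

lemma halfspace_tilt_from_apex:
  fixes K :: "'a::real_inner set"
  assumes conv: "convex K" and f: "f \<in> K" and A: "0 < v \<bullet> c - s"
    and proj: "\<And>x. x \<in> K \<Longrightarrow> s \<le> v \<bullet> ((1/4) *\<^sub>R (x - f) + f) \<Longrightarrow>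
       v \<bullet> ((1/4) *\<^sub>R (x - f) + f) < v \<bullet> c \<and> central_proj c v s ((1/4) *\<^sub>R (x - f) + f) \<in> K"
    and level: "\<And>y. y \<in> K \<Longrightarrow> v \<bullet> y = s \<Longrightarrow> p \<bullet> y \<le> \<beta>"
    and above: "z0 \<in> (\<lambda>x. (1/4) *\<^sub>R (x - f) + f) ` K" "s < v \<bullet> z0"
  obtains k where "(\<beta> - p \<bullet> c) / (v \<bullet> c - s) \<le> k"
    "\<And>z. z \<in> (\<lambda>x. (1/4) *\<^sub>R (x - f) + f) ` K \<Longrightarrow> p \<bullet> z + k * (v \<bullet> z - s) \<le> \<beta>"
proof (rule halfspace_tilt)
  let ?S = "(\<lambda>x. (1/4) *\<^sub>R (x - f) + f) ` K"
  have SK: "?S \<subseteq> K" using homothety_image_subset[OF conv f] by simp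
  show "convex ?S" using convex_homothety_image[OF conv] .
  show "p \<bullet> z \<le> \<beta>" if "z \<in> ?S" "v \<bullet> z = s" for z using that SK level by blast
  show "z0 \<in> ?S" "s < v \<bullet> z0" by (fact above)+
  fix z assume z: "z \<in> ?S" "s \<le> v \<bullet> z"
  then obtain x where x: "x \<in> K" "z = (1/4) *\<^sub>R (x - f) + f" by blast
  then have zc: "v \<bullet> z < v \<bullet> c" and mem: "central_proj c v s z \<in> K" using proj z(2) by auto
  have "p \<bullet> central_proj c v s z \<le> \<beta>"
    using level[OF mem] inner_central_proj zc by (metis less_irrefl)
  then show "p \<bullet> z + (\<beta> - p \<bullet> c) / (v \<bullet> c - s) * (v \<bullet> z - s) \<le> \<beta>"
    by (rule inner_le_from_central_proj[OF A zc])
qed (rule that)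

lemma cone_cover_from_apex:
  fixes K :: "('a::euclidean_space \<times> real) set" and a :: "'i \<Rightarrow> 'a" and f c :: "'a \<times> real"
    and t :: int and \<sigma> :: real
  defines "h \<equiv> \<lambda>x::'a \<times> real. \<sigma> * (snd x - t)"
    and "S \<equiv> (\<lambda>x. (1/4) *\<^sub>R (x - f) + f) ` K"
  assumes lf: "lattice_free (\<Inter>i\<in>I. {y. a i \<bullet> y \<le> b i})"
    and fin: "finite I" and nz: "\<And>i. i \<in> I \<Longrightarrow> a i \<noteq> 0" and \<sigma>: "\<sigma> = 1 \<or> \<sigma> = -1"
    and conv: "convex K" and f: "f \<in> K"
    and slice: "\<And>x. x \<in> K \<Longrightarrow> snd x = real_of_int t \<Longrightarrow> fst x \<in> (\<Inter>i\<in>I. {y. a i \<bullet> y \<le> b i})"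
    and apex: "0 < h c" "h c \<le> 1"
    and proj: "\<And>x. x \<in> K \<Longrightarrow> 0 \<le> h ((1/4) *\<^sub>R (x - f) + f) \<Longrightarrow>
       h ((1/4) *\<^sub>R (x - f) + f) < h c \<and> central_proj c (0, \<sigma>) (\<sigma> * t) ((1/4) *\<^sub>R (x - f) + f) \<in> K"
    and bottom: "\<And>x. x \<in> K \<Longrightarrow> -1 \<le> h x"
    and above: "z \<in> S" "0 < h z"
  shows "\<exists>B\<in>lf_poly (card I + 1). S \<subseteq> B"
proof -
  have hv: "h x = ((0::'a), \<sigma>) \<bullet> x - \<sigma> * t" for x
    by (simp add: h_def inner_prod_def algebra_simps)
  have A: "0 < ((0::'a), \<sigma>) \<bullet> c - \<sigma> * t" using apex(1) hv by simp
  have proj': "\<And>x. x \<in> K \<Longrightarrow> \<sigma> * t \<le> ((0::'a), \<sigma>) \<bullet> ((1/4) *\<^sub>R (x - f) + f) \<Longrightarrow>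
       ((0::'a), \<sigma>) \<bullet> ((1/4) *\<^sub>R (x - f) + f) < ((0::'a), \<sigma>) \<bullet> c \<and>
       central_proj c (0, \<sigma>) (\<sigma> * t) ((1/4) *\<^sub>R (x - f) + f) \<in> K"
    using proj unfolding hv by auto
  have above': "z \<in> (\<lambda>x. (1/4) *\<^sub>R (x - f) + f) ` K" "\<sigma> * t < ((0::'a), \<sigma>) \<bullet> z"
    using above hv by (auto simp: S_def)
  have "\<exists>k. (b i - a i \<bullet> fst c) / h c \<le> k \<and> (\<forall>z\<in>S. a i \<bullet> fst z + k * h z \<le> b i)"
    if i: "i \<in> I" for i
  proof -
    have level: "(a i, 0) \<bullet> y \<le> b i" if "y \<in> K" "((0::'a), \<sigma>) \<bullet> y = \<sigma> * t" for y
      using slice[OF that(1)] that(2) i \<sigma> by (auto simp: inner_prod_def)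
    obtain k where "(b i - (a i, 0) \<bullet> c) / (((0::'a), \<sigma>) \<bullet> c - \<sigma> * t) \<le> k"
      "\<And>z. z \<in> S \<Longrightarrow> (a i, 0) \<bullet> z + k * (((0::'a), \<sigma>) \<bullet> z - \<sigma> * t) \<le> b i"
      using halfspace_tilt_from_apex[OF conv f A proj' level above'] unfolding S_def by blast
    then show ?thesis unfolding hv[symmetric] by (auto simp: inner_prod_def)
  qed
  then obtain k where k: "\<And>i. i \<in> I \<Longrightarrow> (b i - a i \<bullet> fst c) / h c \<le> k i"
    "\<And>i z. i \<in> I \<Longrightarrow> z \<in> S \<Longrightarrow> a i \<bullet> fst z + k i * h z \<le> b i"
    by metis
  let ?B = "{x::'a \<times> real. -1 \<le> h x \<and> (\<forall>i\<in>I. a i \<bullet> fst x + k i * h x \<le> b i)}"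
  have "?B \<in> lf_poly (card I + 1)"
    unfolding h_def
    using k(1) apex
    by (intro cone_over_lattice_free_in_lf_poly[OF lf fin nz \<sigma>, where \<kappa> = "1 / h c" and w = "fst c"])
      (auto simp: field_simps)
  moreover have "S \<subseteq> K" using homothety_image_subset[OF conv f, of "1/4"] by (simp add: S_def)
  then have "S \<subseteq> ?B" using k(2) bottom by blast
  ultimately show ?thesis by blast
qed

text \<open>Here \<open>h\<close> is the signed height over the hyperplane \<open>x\<^sub>n = t\<close>, and \<open>H\<close> and \<open>G\<close> are the
  extents of \<open>K\<close> above and below \<open>f\<close>.\<close>
lemma crossing_quarter_shrink_in_lf_poly:
  fixes K :: "('a::euclidean_space \<times> real) set" and a :: "'i \<Rightarrow> 'a" and f :: "'a \<times> real"
    and t :: int and \<sigma> :: real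
  defines "h \<equiv> \<lambda>x::'a \<times> real. \<sigma> * (snd x - t)"
    and "S \<equiv> (\<lambda>x. (1/4) *\<^sub>R (x - f) + f) ` K"
  assumes lf: "lattice_free (\<Inter>i\<in>I. {y. a i \<bullet> y \<le> b i})"
    and fin: "finite I" and nz: "\<And>i. i \<in> I \<Longrightarrow> a i \<noteq> 0" and \<sigma>: "\<sigma> = 1 \<or> \<sigma> = -1"
    and conv: "convex K" and f: "f \<in> K"
    and slice: "\<And>x. x \<in> K \<Longrightarrow> snd x = real_of_int t \<Longrightarrow> fst x \<in> (\<Inter>i\<in>I. {y. a i \<bullet> y \<le> b i})"
    and upper: "\<And>x. x \<in> K \<Longrightarrow> h x \<le> h f + H"
    and lower: "\<And>x. x \<in> K \<Longrightarrow> h f - G \<le> h x"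
    and deep: "\<And>u. u < G \<Longrightarrow> \<exists>q\<in>K. h q < h f - u"
    and HG: "H \<le> G" "G + H \<le> 1"
    and crossing: "z1 \<in> S" "h z1 < 0" "z2 \<in> S" "0 < h z2"
  shows "\<exists>B\<in>lf_poly (card I + 1). S \<subseteq> B"
proof -
  have hv: "h x = ((0::'a), \<sigma>) \<bullet> x - \<sigma> * t" for x
    by (simp add: h_def inner_prod_def algebra_simps)
  have h_shrink: "h ((1/4) *\<^sub>R (x - f) + f) = h f + (h x - h f) / 4" for x
    by (simp add: h_def field_simps)
  have H: "0 \<le> H" using upper[OF f] by simp
  obtain x1 x2 where x1: "x1 \<in> K" "h z1 = h f + (h x1 - h f) / 4"
    and x2: "x2 \<in> K" "h z2 = h f + (h x2 - h f) / 4"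
    using crossing(1,3) h_shrink by (auto simp: S_def)
  have pos: "0 < 4 * h f + H" using x2 crossing(4) upper[OF x2(1)] by argo
  have dG: "4 * h f < G" using x1 crossing(2) lower[OF x1(1)] by argo
  obtain u0 where "u0 < G" and u0:
    "\<And>u. u0 < u \<Longrightarrow> 4 * h f + H < 3 * u \<and> (4 * h f + H) * (1 - h f) \<le> u * (3 - 4 * h f - H)"
    using apex_condition_near[OF H HG dG pos] by blast
  then obtain q where q: "q \<in> K" "h q < h f - u0" using deep by blast
  obtain c where "0 < h c" "h c \<le> 1"
    "\<And>x. x \<in> K \<Longrightarrow> 0 \<le> h ((1/4) *\<^sub>R (x - f) + f) \<Longrightarrow>
       h ((1/4) *\<^sub>R (x - f) + f) < h c \<and> central_proj c (0, \<sigma>) (\<sigma> * t) ((1/4) *\<^sub>R (x - f) + f) \<in> K"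
    using apex_over_quarter_shrink[OF conv f q(1), of "(0, \<sigma>)" "\<sigma> * t" H]
      upper pos u0[of "h f - h q"] q(2)
    unfolding hv by (auto simp: algebra_simps)
  moreover have "-1 \<le> h x" if "x \<in> K" for x using lower[OF that] HG H pos by linarith
  ultimately show ?thesis
    using cone_cover_from_apex[OF lf fin nz \<sigma> conv f slice] crossing(3,4)
    unfolding h_def S_def by blast
qed

lemma real_set_diameter_le:
  fixes X :: "real set"
  assumes ne: "X \<noteq> {}" and diam: "\<And>x y. x \<in> X \<Longrightarrow> y \<in> X \<Longrightarrow> x - y \<le> c"
  obtains lo hi where "\<And>x. x \<in> X \<Longrightarrow> lo \<le> x \<and> x \<le> hi" "hi \<le> lo + c"
    "\<And>y. lo < y \<Longrightarrow> \<exists>x\<in>X. x < y" "\<And>y. y < hi \<Longrightarrow> \<exists>x\<in>X. y < x"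
proof
  obtain x0 where x0: "x0 \<in> X" using ne by blast
  have "x0 - c \<le> y" "y \<le> x0 + c" if "y \<in> X" for y
    using diam[OF x0 that] diam[OF that x0] by simp_all
  then have bdd: "bdd_below X" "bdd_above X" by (auto simp: bdd_below_def bdd_above_def)
  show "Inf X \<le> x \<and> x \<le> Sup X" if "x \<in> X" for x
    using that bdd by (simp add: cInf_lower cSup_upper)
  show "\<exists>x\<in>X. x < y" if "Inf X < y" for y using that cInf_less_iff[OF ne bdd(1)] by blast
  show "\<exists>x\<in>X. y < x" if "y < Sup X" for y using that less_cSup_iff[OF ne bdd(2)] by blast
  have "x - c \<le> Inf X" if x: "x \<in> X" for x
  proof (rule cInf_greatest[OF ne])
    show "x - c \<le> y" if "y \<in> X" for y using diam[OF x that] by simp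
  qed
  then show "Sup X \<le> Inf X + c"
    using ne by (intro cSup_least) (auto simp: algebra_simps)
qed

text \<open>The orientation is chosen so that \<open>K\<close> reaches less far above \<open>f\<close> than below it.\<close>
lemma crossing_flat_set_in_lf_poly:
  fixes K :: "('a::euclidean_space \<times> real) set" and a :: "'i \<Rightarrow> 'a" and f :: "'a \<times> real"
    and t :: int
  defines "S \<equiv> (\<lambda>x. (1/4) *\<^sub>R (x - f) + f) ` K"
  assumes lf: "lattice_free (\<Inter>i\<in>I. {y. a i \<bullet> y \<le> b i})"
    and fin: "finite I" and nz: "\<And>i. i \<in> I \<Longrightarrow> a i \<noteq> 0"
    and conv: "convex K" and f: "f \<in> K"
    and slice: "\<And>x. x \<in> K \<Longrightarrow> snd x = real_of_int t \<Longrightarrow> fst x \<in> (\<Inter>i\<in>I. {y. a i \<bullet> y \<le> b i})"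
    and bounds: "\<And>x. x \<in> K \<Longrightarrow> lo \<le> snd x \<and> snd x \<le> hi" "hi \<le> lo + 1"
    and below_lo: "\<And>y. lo < y \<Longrightarrow> \<exists>x\<in>K. snd x < y"
    and above_hi: "\<And>y. y < hi \<Longrightarrow> \<exists>x\<in>K. y < snd x"
    and cross: "z1 \<in> S" "snd z1 < real_of_int t" "z2 \<in> S" "real_of_int t < snd z2"
  shows "\<exists>B\<in>lf_poly (card I + 1). S \<subseteq> B"
proof -
  note crossing = crossing_quarter_shrink_in_lf_poly[OF lf fin nz _ conv f slice, folded S_def]
  show ?thesis
  proof (cases "hi - snd f \<le> snd f - lo")
    case True
    show ?thesis
    proof (rule crossing[where \<sigma> = 1 and H = "hi - snd f" and G = "snd f - lo"])
      show "\<exists>q\<in>K. 1 * (snd q - t) < 1 * (snd f - t) - u" if "u < snd f - lo" for u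
        using below_lo[of "snd f - u"] that by auto
    qed (use True cross bounds in auto)
  next
    case False
    show ?thesis
    proof (rule crossing[where \<sigma> = "-1" and H = "snd f - lo" and G = "hi - snd f"])
      show "\<exists>q\<in>K. -1 * (snd q - t) < -1 * (snd f - t) - u" if u: "u < hi - snd f" for u
      proof -
        obtain x where "x \<in> K" "snd f + u < snd x" using above_hi[of "snd f + u"] u by auto
        then show ?thesis by (intro bexI[of _ x]) auto
      qed
    qed (use False cross bounds in auto)
  qed
qed

lemma quarter_shrink_of_flat_set_in_lf_poly:
  fixes K :: "('a::euclidean_space \<times> real) set" and a :: "'i \<Rightarrow> 'a" and t :: int
  assumes lf: "lattice_free (\<Inter>i\<in>I. {y. a i \<bullet> y \<le> b i})"
    and fin: "finite I" and ne: "I \<noteq> {}" and nz: "\<And>i. i \<in> I \<Longrightarrow> a i \<noteq> 0"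
    and conv: "convex K" and f: "f \<in> K"
    and slice: "\<And>x. x \<in> K \<Longrightarrow> snd x = real_of_int t \<Longrightarrow> fst x \<in> (\<Inter>i\<in>I. {y. a i \<bullet> y \<le> b i})"
    and flat: "\<And>x y. x \<in> K \<Longrightarrow> y \<in> K \<Longrightarrow> snd x - snd y \<le> 1"
    and meet: "q \<in> K" "snd q = real_of_int t"
  shows "\<exists>B\<in>lf_poly (card I + 1). (\<lambda>x. (1/4) *\<^sub>R (x - f) + f) ` K \<subseteq> B"
proof -
  define S where "S = (\<lambda>x. (1/4) *\<^sub>R (x - f) + f) ` K"
  have SK: "S \<subseteq> K" using homothety_image_subset[OF conv f, of "1/4"] by (simp add: S_def)
  have "snd ` K \<noteq> {}" "\<And>x y. x \<in> snd ` K \<Longrightarrow> y \<in> snd ` K \<Longrightarrow> x - y \<le> 1"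
    using f flat by auto
  then obtain lo hi where bounds: "\<And>x. x \<in> K \<Longrightarrow> lo \<le> snd x \<and> snd x \<le> hi" "hi \<le> lo + 1"
    and approx: "\<And>y. lo < y \<Longrightarrow> \<exists>x\<in>K. snd x < y" "\<And>y. y < hi \<Longrightarrow> \<exists>x\<in>K. y < snd x"
    by (rule real_set_diameter_le) auto
  have t: "lo \<le> t" "t \<le> hi" using bounds(1)[OF meet(1)] meet(2) by auto
  have slab: "\<exists>B\<in>lf_poly (card I + 1). S \<subseteq> B"
    if "\<And>z. z \<in> S \<Longrightarrow> real_of_int k \<le> snd z \<and> snd z \<le> real_of_int k + 1" for k :: int
  proof
    have "2 \<le> card I + 1" using fin ne by (simp add: Suc_leI card_gt_0_iff)
    then show "{x::'a \<times> real. real_of_int k \<le> snd x \<and> snd x \<le> real_of_int k + 1} \<in> lf_poly (card I + 1)"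
      by (rule lf_poly_mono[OF slab_in_lf_poly])
    show "S \<subseteq> {x. real_of_int k \<le> snd x \<and> snd x \<le> real_of_int k + 1}" using that by blast
  qed
  consider (below) "\<forall>z\<in>S. snd z \<le> t" | (above) "\<forall>z\<in>S. t \<le> snd z"
    | (cross) z1 z2 where "z1 \<in> S" "snd z1 < real_of_int t" "z2 \<in> S" "real_of_int t < snd z2"
    by (meson not_le)
  then have "\<exists>B\<in>lf_poly (card I + 1). S \<subseteq> B"
  proof cases
    case below
    show ?thesis by (rule slab[of "t - 1"]) (use below bounds SK t in force)
  next
    case above
    show ?thesis by (rule slab[of t]) (use above bounds SK t in force)
  next
    case cross
    then show ?thesis
      using crossing_flat_set_in_lf_poly[OF lf fin nz conv f slice bounds approx]
      unfolding S_def by blast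
  qed
  then show ?thesis by (simp add: S_def)
qed

lemma width_le_imp_inner_diff_le:
  assumes "width X u \<le> ereal c" "x \<in> X" "y \<in> X"
  shows "u \<bullet> x - u \<bullet> y \<le> c"
proof -
  have "ereal (u \<bullet> x) - ereal (u \<bullet> y) \<le> width X u"
    unfolding width_def using assms(2,3)
    by (intro ereal_minus_mono SUP_upper INF_lower)
  from order_trans[OF this assms(1)] show ?thesis by simp
qed

theorem lemma5p4:
  fixes L :: "('a::euclidean_space \<times> real) set"
    and D :: "'a set"
    and f :: "'a \<times> real"
    and \<gamma> :: real and m :: nat and t :: int
  assumes "L \<in> lf_poly_all"
    and "f \<in> interior L"
    and "0 < \<gamma>" and "\<gamma> \<le> 1"
    and "max_lattice_free D" and "D \<in> lf_poly m"
    and "L \<inter> (UNIV \<times> {real_of_int t}) \<subseteq> D \<times> {real_of_int t}"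
    and "width ((\<lambda>x. \<gamma> *\<^sub>R (x - f) + f) ` L) (0, 1) \<le> 1"
    and "(\<lambda>x. \<gamma> *\<^sub>R (x - f) + f) ` L \<inter> (UNIV \<times> {real_of_int t}) \<noteq> {}"
  shows "\<exists>B. B \<in> lf_poly (m + 1) \<and> (\<lambda>x. (\<gamma> / 4) *\<^sub>R (x - f) + f) ` L \<subseteq> B"
proof -
  obtain I :: "'a set set" and a b where I: "finite I" "I \<noteq> {}" "card I \<le> m"
    and nz: "\<And>i. i \<in> I \<Longrightarrow> a i \<noteq> 0" and D: "D = (\<Inter>i\<in>I. {x. a i \<bullet> x \<le> b i})"
    by (rule lf_poly_halfspace_representation[OF assms(6)]) blast
  have lf: "lattice_free (\<Inter>i\<in>I. {x. a i \<bullet> x \<le> b i})"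
    using assms(5) D by (simp add: max_lattice_free_def)
  have conv: "convex L" using assms(1) by (simp add: lf_poly_all_def lattice_free_def)
  have f: "f \<in> L" using assms(2) interior_subset by blast
  define K where "K = (\<lambda>x. \<gamma> *\<^sub>R (x - f) + f) ` L"
  have K: "convex K" "f \<in> K" "K \<subseteq> L"
    using convex_homothety_image[OF conv] homothety_image_subset[OF conv f] assms(3,4) f
    by (auto simp: K_def)
  have slice: "fst x \<in> (\<Inter>i\<in>I. {x. a i \<bullet> x \<le> b i})" if "x \<in> K" "snd x = real_of_int t" for x
    using assms(7) K(3) D that by (auto simp: mem_Times_iff)
  have flat: "snd x - snd y \<le> 1" if "x \<in> K" "y \<in> K" for x y
    using width_le_imp_inner_diff_le[of K "(0, 1)" 1 x y] assms(8) that
    by (simp add: K_def inner_prod_def one_ereal_def)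
  have "K \<inter> (UNIV \<times> {real_of_int t}) \<noteq> {}" unfolding K_def by (fact assms(9))
  then obtain q where "q \<in> K \<inter> (UNIV \<times> {real_of_int t})" by blast
  then have q: "q \<in> K" "snd q = real_of_int t" by (auto simp: mem_Times_iff)
  obtain B where B: "B \<in> lf_poly (card I + 1)" "(\<lambda>x. (1/4) *\<^sub>R (x - f) + f) ` K \<subseteq> B"
    using quarter_shrink_of_flat_set_in_lf_poly[where a = a and b = b and I = I and K = K,
        OF lf I(1,2) nz K(1,2) slice flat q] by blast
  have "(\<lambda>x. (1/4) *\<^sub>R (x - f) + f) ` K = (\<lambda>x. (\<gamma> / 4) *\<^sub>R (x - f) + f) ` L"
    by (simp add: K_def image_image algebra_simps)
  moreover have "B \<in> lf_poly (m + 1)" by (rule lf_poly_mono[OF B(1)]) (simp add: I(3))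
  ultimately show ?thesis using B(2) by metis
qed

end
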